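(* Let $\mathscr Q_n$ be a non-singular quadric in $\mathrm{PG}(n,2)$ of projective index $g\geq1$, and for $0\le s<g$ let $\Gamma_s$ be the graph constructed from an $s$-dimensional subspace $\alpha_s$ contained in $\mathscr Q_n$ as described below. Then the graphs $\Gamma_0,\Gamma_1,\ldots,\Gamma_{g-1}$ are pairwise non-isomorphic.
   Context: A non-singular quadric $\mathscr Q_n$ in $\mathrm{PG}(n,2)$ is the point set of a non-degenerate quadric; its projective index $g$ is the largest dimension of a projective subspace contained in $\mathscr Q_n$. The point-graph $\Gamma$ has vertex set the points of $\mathscr Q_n$, two distinct points adjacent iff the line joining them is contained in $\mathscr Q_n$. For $0\le s<g$ and an $s$-dimensional subspace $\alpha_s\subseteq\mathscr Q_n$: a point $X$ of $\mathscr Q_n$ has type (i) if $X\in\alpha_s$; type (ii) if $X\notin\alpha_s$ and $\langle\alpha_s,X\rangle\subseteq\mathscr Q_n$; type (iii) otherwise. Let $\mathcal X_s$ be the type (ii) points and $\mathcal Y_s$ the points of type (i) or (iii). The graph $\Gamma_s$ has the same vertex set as $\Gamma$ and the same edges, except that for each vertex $R\in\mathcal Y_s$ having exactly $\frac12|\mathcal X_s|$ neighbours in $\mathcal X_s$ (in $\Gamma$), those edges are deleted and $R$ is joined instead to the other $\frac12|\mathcal X_s|$ vertices of $\mathcal X_s$. *)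

theory Defs
  imports Main "HOL-Library.Z2"
begin

text \<open>Vectors of GF(2)^(n+1), coordinates 0..n; GF(2) is the field bit.
  Each point of PG(n,2) is represented by its unique nonzero vector.\<close>

definition vecs :: "nat \<Rightarrow> (nat \<Rightarrow> bit) set" where
  "vecs n = {x. \<forall>i>n. x i = 0}"

definition zerov :: "nat \<Rightarrow> bit" where
  "zerov = (\<lambda>i. 0)"

definition vadd :: "(nat \<Rightarrow> bit) \<Rightarrow> (nat \<Rightarrow> bit) \<Rightarrow> (nat \<Rightarrow> bit)" where
  "vadd x y = (\<lambda>i. x i + y i)"

definition qform :: "nat \<Rightarrow> (nat \<Rightarrow> nat \<Rightarrow> bit) \<Rightarrow> (nat \<Rightarrow> bit) \<Rightarrow> bit" where
  "qform n a x = (\<Sum>i\<le>n. \<Sum>j\<in>{i..n}. a i j * x i * x j)"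

definition polar :: "nat \<Rightarrow> (nat \<Rightarrow> nat \<Rightarrow> bit) \<Rightarrow> (nat \<Rightarrow> bit) \<Rightarrow> (nat \<Rightarrow> bit) \<Rightarrow> bit" where
  "polar n a x y = qform n a (vadd x y) - qform n a x - qform n a y"

definition nonsingular :: "nat \<Rightarrow> (nat \<Rightarrow> nat \<Rightarrow> bit) \<Rightarrow> bool" where
  "nonsingular n a \<longleftrightarrow>
     (\<forall>x\<in>vecs n. x \<noteq> zerov \<and> qform n a x = 0 \<longrightarrow> (\<exists>y\<in>vecs n. polar n a x y \<noteq> 0))"

definition quadric :: "nat \<Rightarrow> (nat \<Rightarrow> nat \<Rightarrow> bit) \<Rightarrow> (nat \<Rightarrow> bit) set" where
  "quadric n a = {x \<in> vecs n. x \<noteq> zerov \<and> qform n a x = 0}"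

text \<open>Linear subspaces of GF(2)^(n+1) (over GF(2): contain 0, closed under addition).\<close>
definition lin_subspace :: "nat \<Rightarrow> (nat \<Rightarrow> bit) set \<Rightarrow> bool" where
  "lin_subspace n W \<longleftrightarrow> W \<subseteq> vecs n \<and> zerov \<in> W \<and> (\<forall>x\<in>W. \<forall>y\<in>W. vadd x y \<in> W)"

text \<open>Projective s-dimensional subspace = point set of a linear subspace of
  vector dimension s+1, i.e. with 2^(s+1) vectors.\<close>
definition proj_subspace :: "nat \<Rightarrow> nat \<Rightarrow> (nat \<Rightarrow> bit) set \<Rightarrow> bool" where
  "proj_subspace n s S \<longleftrightarrow>
     (\<exists>W. lin_subspace n W \<and> card W = 2 ^ (s + 1) \<and> S = W - {zerov})"

definition lspan :: "nat \<Rightarrow> (nat \<Rightarrow> bit) set \<Rightarrow> (nat \<Rightarrow> bit) set" where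
  "lspan n S = \<Inter>{W. lin_subspace n W \<and> S \<subseteq> W}"

definition pjoin :: "nat \<Rightarrow> (nat \<Rightarrow> bit) set \<Rightarrow> (nat \<Rightarrow> bit) set" where
  "pjoin n S = lspan n S - {zerov}"

definition has_proj_index :: "nat \<Rightarrow> (nat \<Rightarrow> nat \<Rightarrow> bit) \<Rightarrow> nat \<Rightarrow> bool" where
  "has_proj_index n a g \<longleftrightarrow>
     (\<exists>S. proj_subspace n g S \<and> S \<subseteq> quadric n a) \<and>
     (\<forall>h S. proj_subspace n h S \<and> S \<subseteq> quadric n a \<longrightarrow> h \<le> g)"

definition qadj :: "nat \<Rightarrow> (nat \<Rightarrow> nat \<Rightarrow> bit) \<Rightarrow> (nat \<Rightarrow> bit) \<Rightarrow> (nat \<Rightarrow> bit) \<Rightarrow> bool" where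
  "qadj n a P Q \<longleftrightarrow> P \<in> quadric n a \<and> Q \<in> quadric n a \<and> P \<noteq> Q \<and> pjoin n {P, Q} \<subseteq> quadric n a"

text \<open>Type (ii) points w.r.t. alpha, and the rest (types (i),(iii)).\<close>
definition typeX :: "nat \<Rightarrow> (nat \<Rightarrow> nat \<Rightarrow> bit) \<Rightarrow> (nat \<Rightarrow> bit) set \<Rightarrow> (nat \<Rightarrow> bit) set" where
  "typeX n a \<alpha> = {X \<in> quadric n a. X \<notin> \<alpha> \<and> pjoin n (\<alpha> \<union> {X}) \<subseteq> quadric n a}"

definition typeY :: "nat \<Rightarrow> (nat \<Rightarrow> nat \<Rightarrow> bit) \<Rightarrow> (nat \<Rightarrow> bit) set \<Rightarrow> (nat \<Rightarrow> bit) set" where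
  "typeY n a \<alpha> = quadric n a - typeX n a \<alpha>"

definition switched :: "nat \<Rightarrow> (nat \<Rightarrow> nat \<Rightarrow> bit) \<Rightarrow> (nat \<Rightarrow> bit) set \<Rightarrow> (nat \<Rightarrow> bit) \<Rightarrow> bool" where
  "switched n a \<alpha> R \<longleftrightarrow> R \<in> typeY n a \<alpha> \<and>
     2 * card {Z \<in> typeX n a \<alpha>. qadj n a R Z} = card (typeX n a \<alpha>)"

definition gamma_adj :: "nat \<Rightarrow> (nat \<Rightarrow> nat \<Rightarrow> bit) \<Rightarrow> (nat \<Rightarrow> bit) set \<Rightarrow> (nat \<Rightarrow> bit) \<Rightarrow> (nat \<Rightarrow> bit) \<Rightarrow> bool" where
  "gamma_adj n a \<alpha> P Q \<longleftrightarrow>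
     (if (switched n a \<alpha> P \<and> Q \<in> typeX n a \<alpha>) \<or> (switched n a \<alpha> Q \<and> P \<in> typeX n a \<alpha>)
      then P \<in> quadric n a \<and> Q \<in> quadric n a \<and> \<not> qadj n a P Q
      else qadj n a P Q)"

definition graph_iso :: "'a set \<Rightarrow> ('a \<Rightarrow> 'a \<Rightarrow> bool) \<Rightarrow> 'b set \<Rightarrow> ('b \<Rightarrow> 'b \<Rightarrow> bool) \<Rightarrow> bool" where
  "graph_iso V1 E1 V2 E2 \<longleftrightarrow>
     (\<exists>f. bij_betw f V1 V2 \<and> (\<forall>x\<in>V1. \<forall>y\<in>V1. E1 x y \<longleftrightarrow> E2 (f x) (f y)))"

end

theory Submission
  imports Defs "HOL-Library.Function_Algebras" "HOL-Library.FuncSet"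
begin

text \<open>Call a vertex \<open>v\<close> of a graph twinned if every neighbour \<open>u\<close> of \<open>v\<close> has a common
  neighbour \<open>w\<close> with \<open>v\<close> that is adjacent to the same vertices of the neighbourhood of \<open>v\<close>
  as \<open>u\<close>. In the collinearity graph of the quadric every vertex is twinned: take for \<open>w\<close> the
  third point of the line \<open>uv\<close>. The switching that produces \<open>\<Gamma>\<^sub>s\<close> keeps the points of
  \<open>\<alpha>\<^sub>s\<close> twinned. For \<open>s = 0\<close> it keeps every point twinned, since away from the point
  \<open>\<alpha>\<^sub>0 = {v}\<close> the graph \<open>\<Gamma>\<^sub>0\<close> is the collinearity graph translated by \<open>v\<close>; for \<open>s \<ge> 1\<close>
  every point outside \<open>\<alpha>\<^sub>s\<close> loses the property. Hence \<open>\<Gamma>\<^sub>s\<close> has all points of the quadric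
  as twinned vertices if \<open>s = 0\<close> and \<open>2^(s+1) - 1\<close> of them otherwise, and these numbers differ
  for distinct \<open>s < g\<close> because a \<open>g\<close>-space in the quadric has \<open>2^(g+1) - 1\<close> points. The
  switching is never vacuous: a dimension count with linear functionals shows that a \<open>g\<close>-space
  forces points of type (ii) to exist.\<close>

declare add_bit_eq_xor[simp del] mult_bit_eq_and[simp del]

section \<open>Vectors, the quadratic form and its polar form\<close>

lemma vadd_eq_plus: "vadd x y = x + y"
  by (simp add: vadd_def plus_fun_def)

lemma zerov_eq_0: "zerov = 0"
  by (simp add: zerov_def zero_fun_def)

lemma bit_add_self [simp]: "(b::bit) + b = 0"
  by (cases b) simp_all

lemma bit_add_eq_0_iff: "(x::bit) + y = 0 \<longleftrightarrow> x = y"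
  by (cases x; cases y) simp_all

lemma bit_neq_add_1: "(x::bit) \<noteq> y \<Longrightarrow> x + 1 = y"
  by (cases x; cases y) simp_all

lemma fun_bit_add_self [simp]: "(x::nat \<Rightarrow> bit) + x = 0"
  by (simp add: fun_eq_iff)

lemma fun_bit_add_cancel_left [simp]: "(x::nat \<Rightarrow> bit) + (x + y) = y"
  by (simp flip: add.assoc)

lemma fun_bit_add_cancel_right [simp]: "(y::nat \<Rightarrow> bit) + x + x = y"
  by (simp add: add.assoc)

lemma fun_bit_add_eq_0_iff: "(x::nat \<Rightarrow> bit) + y = 0 \<longleftrightarrow> x = y"
  by (metis add.right_neutral fun_bit_add_cancel_left fun_bit_add_self)

lemma fun_bit_add_eq_left_iff: "(x::nat \<Rightarrow> bit) + y = x \<longleftrightarrow> y = 0"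
  by (metis add.right_neutral add_left_cancel)

lemma fun_bit_add_eq_right_iff: "(x::nat \<Rightarrow> bit) + y = y \<longleftrightarrow> x = 0"
  by (metis add_0 add_right_cancel)

lemma UNIV_bit: "(UNIV::bit set) = {0, 1}"
  by (auto intro: bit.exhaust)

lemma polar_expand:
  "polar n a x y = (\<Sum>i\<le>n. \<Sum>j\<in>{i..n}. a i j * (x i * y j + y i * x j))"
proof -
  have "qform n a (vadd x y) = qform n a x + qform n a y
      + (\<Sum>i\<le>n. \<Sum>j\<in>{i..n}. a i j * (x i * y j + y i * x j))"
    unfolding qform_def vadd_def by (simp add: sum.distrib[symmetric] algebra_simps)
  then show ?thesis
    unfolding polar_def by (simp add: algebra_simps)
qed

lemma polar_add_left: "polar n a (x + y) z = polar n a x z + polar n a y z"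
  by (simp add: polar_expand sum.distrib[symmetric] algebra_simps)

lemma polar_commute: "polar n a x y = polar n a y x"
  by (simp add: polar_expand algebra_simps)

lemma polar_add_right: "polar n a z (x + y) = polar n a z x + polar n a z y"
  by (metis polar_add_left polar_commute)

lemma polar_self [simp]: "polar n a x x = 0"
  by (simp add: polar_expand flip: mult_2)

lemma polar_zero [simp]: "polar n a 0 x = 0" "polar n a x 0 = 0"
  by (simp_all add: polar_expand)

lemma qform_add: "qform n a (x + y) = qform n a x + qform n a y + polar n a x y"
  by (simp add: polar_def vadd_eq_plus)

lemma qform_zero [simp]: "qform n a 0 = 0"
  by (simp add: qform_def)

lemma vecs_add [intro]: "x \<in> vecs n \<Longrightarrow> y \<in> vecs n \<Longrightarrow> x + y \<in> vecs n"
  by (simp add: vecs_def)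

lemma zero_in_vecs [simp, intro]: "0 \<in> vecs n"
  by (simp add: vecs_def)

lemma finite_vecs: "finite (vecs n)"
proof -
  let ?ext = "\<lambda>f i. if i \<le> n then f i else 0"
  have "vecs n \<subseteq> ?ext ` ({..n} \<rightarrow>\<^sub>E (UNIV::bit set))"
  proof
    fix x assume "x \<in> vecs n"
    then have "x = ?ext (restrict x {..n})"
      by (auto simp: vecs_def fun_eq_iff)
    then show "x \<in> ?ext ` ({..n} \<rightarrow>\<^sub>E UNIV)"
      by (intro image_eqI[where x = "restrict x {..n}"]) auto
  qed
  moreover have "finite ({..n} \<rightarrow>\<^sub>E (UNIV::bit set))"
    by (intro finite_PiE) (auto simp: UNIV_bit)
  ultimately show ?thesis
    by (meson finite_imageI finite_subset)
qed

lemma lin_subspaceI: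
  "W \<subseteq> vecs n \<Longrightarrow> 0 \<in> W \<Longrightarrow> (\<And>x y. x \<in> W \<Longrightarrow> y \<in> W \<Longrightarrow> x + y \<in> W) \<Longrightarrow> lin_subspace n W"
  by (simp add: lin_subspace_def zerov_eq_0 vadd_eq_plus)

lemma lin_subspaceD:
  assumes "lin_subspace n W"
  shows "W \<subseteq> vecs n" "0 \<in> W" "x \<in> W \<Longrightarrow> y \<in> W \<Longrightarrow> x + y \<in> W"
  using assms by (auto simp: lin_subspace_def zerov_eq_0 vadd_eq_plus)

lemma finite_lin_subspace: "lin_subspace n W \<Longrightarrow> finite W"
  using finite_vecs finite_subset lin_subspaceD(1) by blast

lemma lspan_least: "lin_subspace n W \<Longrightarrow> S \<subseteq> W \<Longrightarrow> lspan n S \<subseteq> W"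
  unfolding lspan_def by blast

lemma pjoin_pair:
  assumes "P \<in> vecs n" "Q \<in> vecs n"
  shows "pjoin n {P, Q} = {P, Q, P + Q} - {0}"
proof -
  have sub: "lin_subspace n {0, P, Q, P + Q}"
    by (rule lin_subspaceI) (use assms in \<open>auto simp: add.commute add.left_commute\<close>)
  have "lspan n {P, Q} = {0, P, Q, P + Q}"
  proof
    show "lspan n {P, Q} \<subseteq> {0, P, Q, P + Q}"
      by (rule lspan_least[OF sub]) auto
    show "{0, P, Q, P + Q} \<subseteq> lspan n {P, Q}"
      unfolding lspan_def by (auto dest: lin_subspaceD)
  qed
  then show ?thesis
    by (auto simp: pjoin_def zerov_eq_0)
qed

lemma lin_subspace_extend:
  assumes W: "lin_subspace n W" and x: "x \<in> vecs n"
  shows "lin_subspace n (W \<union> (+) x ` W)"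
proof (rule lin_subspaceI)
  show "W \<union> (+) x ` W \<subseteq> vecs n" "0 \<in> W \<union> (+) x ` W"
    using lin_subspaceD[OF W] x by auto
next
  fix u v assume "u \<in> W \<union> (+) x ` W" "v \<in> W \<union> (+) x ` W"
  then consider "u \<in> W" "v \<in> W" | "u \<in> W" "x + v \<in> W" | "x + u \<in> W" "v \<in> W" | "x + u \<in> W" "x + v \<in> W"
    by auto
  then show "u + v \<in> W \<union> (+) x ` W"
  proof cases
    case 1 then show ?thesis using lin_subspaceD(3)[OF W] by blast
  next
    case 2 then have "x + (u + v) \<in> W" using lin_subspaceD(3)[OF W] by (metis add.left_commute)
    then show ?thesis by (intro UnI2 image_eqI[where x = "x + (u + v)"]) simp_all
  next
    case 3 then have "x + (u + v) \<in> W" using lin_subspaceD(3)[OF W] by (metis add.assoc)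
    then show ?thesis by (intro UnI2 image_eqI[where x = "x + (u + v)"]) simp_all
  next
    case 4 then have "(x + u) + (x + v) \<in> W" using lin_subspaceD(3)[OF W] by blast
    then show ?thesis by (simp add: add.assoc add.left_commute[of x u])
  qed
qed

lemma pjoin_insert:
  assumes W: "lin_subspace n W" and x: "x \<in> vecs n"
  shows "pjoin n ((W - {0}) \<union> {x}) = (W \<union> (+) x ` W) - {0}"
proof -
  have "lspan n ((W - {0}) \<union> {x}) = W \<union> (+) x ` W"
  proof
    show "lspan n (W - {0} \<union> {x}) \<subseteq> W \<union> (+) x ` W"
      by (rule lspan_least[OF lin_subspace_extend[OF W x]]) (use lin_subspaceD(2)[OF W] in force)
    show "W \<union> (+) x ` W \<subseteq> lspan n (W - {0} \<union> {x})"
      unfolding lspan_def using lin_subspaceD(2,3) lin_subspaceD(2)[OF W] by fast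
  qed
  then show ?thesis
    by (simp add: pjoin_def zerov_eq_0)
qed

lemma quadric_iff: "x \<in> quadric n a \<longleftrightarrow> x \<in> vecs n \<and> x \<noteq> 0 \<and> qform n a x = 0"
  by (simp add: quadric_def zerov_eq_0)

lemma add_in_quadric:
  assumes "x \<in> quadric n a" "y \<in> quadric n a" "polar n a x y = 0" "x \<noteq> y"
  shows "x + y \<in> quadric n a"
  using assms by (auto simp: quadric_iff qform_add fun_bit_add_eq_0_iff)

lemma qadj_iff:
  "qadj n a P Q \<longleftrightarrow> P \<in> quadric n a \<and> Q \<in> quadric n a \<and> P \<noteq> Q \<and> polar n a P Q = 0"
proof (cases "P \<in> quadric n a \<and> Q \<in> quadric n a \<and> P \<noteq> Q")
  case True
  then have "P \<in> vecs n" "Q \<in> vecs n" "P + Q \<noteq> 0"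
    by (auto simp: quadric_iff fun_bit_add_eq_0_iff)
  then have "pjoin n {P, Q} \<subseteq> quadric n a \<longleftrightarrow> P + Q \<in> quadric n a"
    using True by (auto simp: pjoin_pair)
  also have "\<dots> \<longleftrightarrow> polar n a P Q = 0"
    using True \<open>P + Q \<noteq> 0\<close> by (auto simp: quadric_iff qform_add)
  finally show ?thesis
    using True by (simp add: qadj_def)
qed (auto simp: qadj_def)

section \<open>Polar values at singular points\<close>

lemma plane_in_quadric:
  assumes a1: "a1 \<in> quadric n a" and a2: "a2 \<in> quadric n a" and a3: "a3 \<in> quadric n a"
    and o12: "polar n a a1 a2 = 0" and o13: "polar n a a1 a3 = 0" and o23: "polar n a a2 a3 = 0"
    and d12: "a1 \<noteq> a2" and d13: "a1 \<noteq> a3" and d23: "a2 \<noteq> a3" and d123: "a1 + a2 \<noteq> a3"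
  shows "a3 + a1 \<in> quadric n a" "a3 + a2 \<in> quadric n a" "a3 + a1 + a2 \<in> quadric n a"
proof -
  show a31: "a3 + a1 \<in> quadric n a" and "a3 + a2 \<in> quadric n a"
    using add_in_quadric[OF a3 a1 _ d13[symmetric]] add_in_quadric[OF a3 a2 _ d23[symmetric]] o13 o23
    by (simp_all add: polar_commute)
  show "a3 + a1 + a2 \<in> quadric n a"
  proof (rule add_in_quadric[OF a31 a2])
    show "polar n a (a3 + a1) a2 = 0"
      using o12 o23 polar_commute[of n a a3 a2] by (simp add: polar_add_left)
    show "a3 + a1 \<noteq> a2"
      using d123 by (metis add.commute fun_bit_add_cancel_left)
  qed
qed

context
  fixes n :: nat and a :: "nat \<Rightarrow> nat \<Rightarrow> bit"
  assumes ns: "nonsingular n a"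
begin

lemma nonsingular_polar_eq_1:
  assumes "x \<in> quadric n a"
  obtains y where "y \<in> vecs n" "polar n a y x = 1"
proof -
  from ns assms obtain y where "y \<in> vecs n" "polar n a x y \<noteq> 0"
    unfolding nonsingular_def quadric_def by blast
  then show thesis
    using that polar_commute[of n a x y] by simp
qed

lemma polar_separates_two:
  assumes a1: "a1 \<in> quadric n a" and a2: "a2 \<in> quadric n a"
    and "polar n a a1 a2 = 0" "a1 \<noteq> a2"
  obtains y where "y \<in> vecs n" "polar n a y a1 = 1" "polar n a y a2 = 0"
proof -
  obtain y1 where y1: "y1 \<in> vecs n" "polar n a y1 a1 = 1"
    using nonsingular_polar_eq_1[OF a1] by blast
  obtain y3 where y3: "y3 \<in> vecs n" "polar n a y3 (a1 + a2) = 1"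
    using nonsingular_polar_eq_1[OF add_in_quadric[OF a1 a2 assms(3,4)]] by blast
  then have "polar n a y3 a1 \<noteq> polar n a y3 a2"
    by (auto simp: polar_add_right bit_add_eq_0_iff)
  \<comment> \<open>one of \<open>y1\<close>, \<open>y3\<close>, \<open>y1 + y3\<close> does the job\<close>
  then consider "polar n a y1 a2 = 0" | "polar n a y3 a1 = 1" "polar n a y3 a2 = 0"
    | "polar n a (y1 + y3) a1 = 1" "polar n a (y1 + y3) a2 = 0"
    using y1 by (cases "polar n a y1 a2"; cases "polar n a y3 a1") (auto simp: polar_add_left)
  then show thesis
    using that y1 y3 by cases blast+
qed

lemma polar_values_two:
  assumes a1: "a1 \<in> quadric n a" and a2: "a2 \<in> quadric n a"
    and o: "polar n a a1 a2 = 0" and d: "a1 \<noteq> a2"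
  obtains y where "y \<in> vecs n" "polar n a y a1 = t1" "polar n a y a2 = t2"
proof -
  obtain e1 where e1: "e1 \<in> vecs n" "polar n a e1 a1 = 1" "polar n a e1 a2 = 0"
    using polar_separates_two[OF a1 a2 o d] by blast
  obtain e2 where e2: "e2 \<in> vecs n" "polar n a e2 a2 = 1" "polar n a e2 a1 = 0"
    using polar_separates_two[OF a2 a1 _ d[symmetric]] o polar_commute[of n a a2 a1] by auto
  let ?y = "(if t1 = 1 then e1 else 0) + (if t2 = 1 then e2 else 0)"
  have "?y \<in> vecs n" "polar n a ?y a1 = t1" "polar n a ?y a2 = t2"
    by (cases t1; cases t2) (use e1 e2 in \<open>auto simp: polar_add_left\<close>)
  then show thesis by (rule that)
qed

lemma polar_separates_three:
  assumes a1: "a1 \<in> quadric n a" and a2: "a2 \<in> quadric n a" and a3: "a3 \<in> quadric n a"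
    and o12: "polar n a a1 a2 = 0" and o13: "polar n a a1 a3 = 0" and o23: "polar n a a2 a3 = 0"
    and d12: "a1 \<noteq> a2" and d13: "a1 \<noteq> a3" and d23: "a2 \<noteq> a3" and d123: "a1 + a2 \<noteq> a3"
  obtains z where "z \<in> vecs n" "polar n a z a1 = 0" "polar n a z a2 = 0" "polar n a z a3 = 1"
proof -
  obtain e1 where e1: "e1 \<in> vecs n" "polar n a e1 a1 = 1" "polar n a e1 a2 = 0"
    using polar_values_two[OF a1 a2 o12 d12, of 1 0] by blast
  obtain e2 where e2: "e2 \<in> vecs n" "polar n a e2 a1 = 0" "polar n a e2 a2 = 1"
    using polar_values_two[OF a1 a2 o12 d12, of 0 1] by blast
  \<comment> \<open>\<open>r\<close> is the point of the plane \<open>\<langle>a1, a2, a3\<rangle>\<close> annihilated by \<open>e1\<close> and \<open>e2\<close>\<close>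
  define r where "r = a3 + (if polar n a e1 a3 = 1 then a1 else 0) + (if polar n a e2 a3 = 1 then a2 else 0)"
  have "a3 + a1 \<in> quadric n a" "a3 + a2 \<in> quadric n a" "a3 + a1 + a2 \<in> quadric n a"
    using plane_in_quadric[OF a1 a2 a3 o12 o13 o23 d12 d13 d23 d123] by simp_all
  then have "r \<in> quadric n a"
    unfolding r_def using a3 by (auto simp: add.assoc)
  then obtain x where x: "x \<in> vecs n" "polar n a x r = 1"
    using nonsingular_polar_eq_1 by blast
  define z where "z = x + (if polar n a x a1 = 1 then e1 else 0) + (if polar n a x a2 = 1 then e2 else 0)"
  have "z \<in> vecs n"
    unfolding z_def using x e1 e2 by auto
  moreover have "polar n a z a1 = 0" "polar n a z a2 = 0"
    unfolding z_def using e1 e2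
    by (cases "polar n a x a1"; cases "polar n a x a2"; simp add: polar_add_left)+
  moreover have "polar n a z a3 = 1"
  proof -
    have "polar n a z a3 = polar n a x a3 + polar n a x a1 * polar n a e1 a3 + polar n a x a2 * polar n a e2 a3"
      unfolding z_def by (cases "polar n a x a1"; cases "polar n a x a2") (simp_all add: polar_add_left)
    also have "\<dots> = polar n a x r"
      unfolding r_def
      by (cases "polar n a e1 a3"; cases "polar n a e2 a3") (simp_all add: polar_add_right)
    finally show ?thesis
      using x(2) by simp
  qed
  ultimately show thesis by (rule that)
qed

lemma polar_values_three:
  assumes a1: "a1 \<in> quadric n a" and a2: "a2 \<in> quadric n a" and a3: "a3 \<in> quadric n a"
    and o12: "polar n a a1 a2 = 0" and o13: "polar n a a1 a3 = 0" and o23: "polar n a a2 a3 = 0"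
    and d12: "a1 \<noteq> a2" and d13: "a1 \<noteq> a3" and d23: "a2 \<noteq> a3" and d123: "a1 + a2 \<noteq> a3"
  obtains y where "y \<in> vecs n" "polar n a y a1 = t1" "polar n a y a2 = t2" "polar n a y a3 = t3"
proof -
  obtain y0 where y0: "y0 \<in> vecs n" "polar n a y0 a1 = t1" "polar n a y0 a2 = t2"
    using polar_values_two[OF a1 a2 o12 d12, of t1 t2] by blast
  obtain z where z: "z \<in> vecs n" "polar n a z a1 = 0" "polar n a z a2 = 0" "polar n a z a3 = 1"
    using polar_separates_three[OF assms] by blast
  let ?y = "if polar n a y0 a3 = t3 then y0 else y0 + z"
  have "?y \<in> vecs n" "polar n a ?y a1 = t1" "polar n a ?y a2 = t2" "polar n a ?y a3 = t3"
    using y0 z by (auto simp: polar_add_left bit_neq_add_1)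
  then show thesis by (rule that)
qed

end

text \<open>A vector with prescribed polar values on a set orthogonal to a singular point \<open>e\<close>
  can be moved onto the quadric by adding \<open>e\<close>.\<close>

lemma quadric_point_polar_values:
  assumes e: "e \<in> quadric n a" and y: "y \<in> vecs n" and ye: "polar n a y e = 1"
    and eS: "\<And>x. x \<in> S \<Longrightarrow> polar n a e x = 0"
  obtains p where "p \<in> quadric n a" "\<And>x. x \<in> S \<Longrightarrow> polar n a p x = polar n a y x"
proof (cases "qform n a y = 0")
  case True
  with y ye show thesis
    by (intro that[of y]) (auto simp: quadric_iff)
next
  case False
  have "y + e \<in> quadric n a"
    using False ye e y by (auto simp: quadric_iff qform_add fun_bit_add_eq_0_iff)
  then show thesis
    using eS by (intro that[of "y + e"]) (auto simp: polar_add_left)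
qed

lemma quadric_point_polar_values_two:
  assumes ns: "nonsingular n a" and a1: "a1 \<in> quadric n a" and a2: "a2 \<in> quadric n a"
    and o: "polar n a a1 a2 = 0" and d: "a1 \<noteq> a2" and t: "t1 = 1 \<or> t2 = 1"
  obtains p where "p \<in> quadric n a" "polar n a p a1 = t1" "polar n a p a2 = t2"
proof -
  obtain y where y: "y \<in> vecs n" "polar n a y a1 = t1" "polar n a y a2 = t2"
    using polar_values_two[OF ns a1 a2 o d, of t1 t2] by blast
  obtain e where e: "e \<in> {a1, a2}" "polar n a y e = 1"
    using t y by blast
  have "e \<in> quadric n a"
    using e(1) a1 a2 by blast
  moreover have "polar n a e x = 0" if "x \<in> {a1, a2}" for x
    using e(1) that o polar_commute[of n a a1 a2] by auto
  ultimately obtain p where p: "p \<in> quadric n a" "\<And>x. x \<in> {a1, a2} \<Longrightarrow> polar n a p x = polar n a y x"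
    using quadric_point_polar_values[OF _ y(1) e(2)] by blast
  show thesis
    using that[OF p(1)] p(2)[of a1] p(2)[of a2] y by simp
qed

lemma quadric_point_polar_values_three:
  assumes ns: "nonsingular n a"
    and a1: "a1 \<in> quadric n a" and a2: "a2 \<in> quadric n a" and a3: "a3 \<in> quadric n a"
    and o12: "polar n a a1 a2 = 0" and o13: "polar n a a1 a3 = 0" and o23: "polar n a a2 a3 = 0"
    and d12: "a1 \<noteq> a2" and d13: "a1 \<noteq> a3" and d23: "a2 \<noteq> a3" and d123: "a1 + a2 \<noteq> a3"
    and t: "t1 = 1 \<or> t2 = 1 \<or> t3 = 1"
  obtains p where "p \<in> quadric n a" "polar n a p a1 = t1" "polar n a p a2 = t2" "polar n a p a3 = t3"
proof -
  obtain y where y: "y \<in> vecs n" "polar n a y a1 = t1" "polar n a y a2 = t2" "polar n a y a3 = t3"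
    using polar_values_three[OF ns a1 a2 a3 o12 o13 o23 d12 d13 d23 d123, of t1 t2 t3] by blast
  obtain e where e: "e \<in> {a1, a2, a3}" "polar n a y e = 1"
    using t y by blast
  have "e \<in> quadric n a"
    using e(1) a1 a2 a3 by blast
  moreover have "polar n a e x = 0" if "x \<in> {a1, a2, a3}" for x
    using e(1) that o12 o13 o23 polar_commute[of n a a1 a2] polar_commute[of n a a1 a3]
      polar_commute[of n a a2 a3] by auto
  ultimately obtain p where p: "p \<in> quadric n a" "\<And>x. x \<in> {a1, a2, a3} \<Longrightarrow> polar n a p x = polar n a y x"
    using quadric_point_polar_values[OF _ y(1) e(2)] by blast
  show thesis
    using that[OF p(1)] p(2)[of a1] p(2)[of a2] p(2)[of a3] y by simp
qed

section \<open>Counting linear functionals\<close>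

text \<open>Linear functionals on \<open>W\<close> vanishing on \<open>T\<close>, normalised to \<open>0\<close> outside \<open>W\<close> so that
  they are determined by their restriction to \<open>W\<close>.\<close>

definition functionals_vanishing :: "(nat \<Rightarrow> bit) set \<Rightarrow> (nat \<Rightarrow> bit) set \<Rightarrow> ((nat \<Rightarrow> bit) \<Rightarrow> bit) set"
  where "functionals_vanishing W T =
    {f. (\<forall>x. x \<notin> W \<longrightarrow> f x = 0) \<and> (\<forall>x\<in>W. \<forall>y\<in>W. f (x + y) = f x + f y) \<and> (\<forall>x\<in>T. f x = 0)}"

lemma functionals_vanishingI:
  "(\<And>x. x \<notin> W \<Longrightarrow> f x = 0) \<Longrightarrow> (\<And>x y. x \<in> W \<Longrightarrow> y \<in> W \<Longrightarrow> f (x + y) = f x + f y)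
    \<Longrightarrow> (\<And>x. x \<in> T \<Longrightarrow> f x = 0) \<Longrightarrow> f \<in> functionals_vanishing W T"
  unfolding functionals_vanishing_def by blast

lemma functionals_vanishingD:
  assumes "f \<in> functionals_vanishing W T"
  shows "x \<notin> W \<Longrightarrow> f x = 0" "x \<in> W \<Longrightarrow> y \<in> W \<Longrightarrow> f (x + y) = f x + f y" "x \<in> T \<Longrightarrow> f x = 0"
  using assms unfolding functionals_vanishing_def by auto

lemma finite_functionals_vanishing:
  assumes "finite W"
  shows "finite (functionals_vanishing W T)"
proof -
  let ?ext = "\<lambda>g x. if x \<in> W then g x else 0"
  have "functionals_vanishing W T \<subseteq> ?ext ` (W \<rightarrow>\<^sub>E (UNIV::bit set))"
  proof
    fix f assume "f \<in> functionals_vanishing W T"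
    then have "f = ?ext (restrict f W)"
      by (auto simp: fun_eq_iff functionals_vanishingD(1))
    then show "f \<in> ?ext ` (W \<rightarrow>\<^sub>E UNIV)"
      by (intro image_eqI[where x = "restrict f W"]) auto
  qed
  moreover have "finite (W \<rightarrow>\<^sub>E (UNIV::bit set))"
    using assms by (intro finite_PiE) (simp_all add: UNIV_bit)
  ultimately show ?thesis
    by (meson finite_imageI finite_subset)
qed

lemma card_lin_subspace_extend:
  assumes T: "lin_subspace n T" and x: "x \<notin> T"
  shows "card (T \<union> (+) x ` T) = 2 * card T"
proof -
  have "T \<inter> (+) x ` T = {}"
  proof (rule ccontr)
    assume "T \<inter> (+) x ` T \<noteq> {}"
    then obtain t where "t \<in> T" "x + t \<in> T" by auto
    then have "x \<in> T"
      using lin_subspaceD(3)[OF T] by (metis fun_bit_add_cancel_right add.commute)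
    with x show False by contradiction
  qed
  moreover have "card ((+) x ` T) = card T"
    by (rule card_image) (simp add: inj_on_def)
  ultimately show ?thesis
    using finite_lin_subspace[OF T] by (simp add: card_Un_disjoint)
qed

text \<open>Fixing the value at a new vector \<open>x\<close> halves the number of functionals: those with
  \<open>f x = 1\<close> are translates of those with \<open>f x = 0\<close>.\<close>

lemma card_functionals_vanishing_extend:
  assumes W: "lin_subspace n W" and TW: "T \<subseteq> W" and x: "x \<in> W"
  shows "card (functionals_vanishing W T) \<le> 2 * card (functionals_vanishing W (T \<union> (+) x ` T))"
proof -
  let ?F = "functionals_vanishing W T" and ?F2 = "functionals_vanishing W (T \<union> (+) x ` T)"
  define G where "G = {f \<in> ?F. f x = 1}"
  have finW: "finite W"
    using finite_lin_subspace[OF W] .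
  have cover: "?F \<subseteq> ?F2 \<union> G"
  proof
    fix f assume f: "f \<in> ?F"
    show "f \<in> ?F2 \<union> G"
    proof (cases "f x = 1")
      case False
      then have "f (x + t) = 0" if "t \<in> T" for t
        using that TW x functionals_vanishingD(2,3)[OF f] by auto
      then have "f \<in> ?F2"
        using functionals_vanishingD[OF f] by (intro functionals_vanishingI) auto
      then show ?thesis by blast
    qed (use f G_def in blast)
  qed
  have "card G \<le> card ?F2"
  proof (cases "G = {}")
    case False
    then obtain f1 where f1: "f1 \<in> G" by blast
    have "(\<lambda>y. f y + f1 y) \<in> ?F2" if f: "f \<in> G" for f
    proof -
      have fF: "f \<in> ?F" "f x = 1" "f1 \<in> ?F" "f1 x = 1"
        using f f1 by (simp_all add: G_def)
      note F = functionals_vanishingD[OF fF(1)] functionals_vanishingD[OF fF(3)]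
      have "f (x + t) + f1 (x + t) = 0" if "t \<in> T" for t
        using that TW x F(2,3,5,6) fF(2,4) by auto
      then show ?thesis
        using F by (intro functionals_vanishingI) (auto simp: ac_simps)
    qed
    then have "(\<lambda>f y. f y + f1 y) ` G \<subseteq> ?F2"
      by blast
    moreover have "inj_on (\<lambda>f y. f y + f1 y) G"
      by (rule inj_onI) (simp add: fun_eq_iff)
    ultimately show ?thesis
      using card_inj_on_le finite_functionals_vanishing[OF finW] by blast
  qed simp
  moreover have "card ?F \<le> card (?F2 \<union> G)"
    using cover finite_functionals_vanishing[OF finW] by (intro card_mono) (auto simp: G_def)
  ultimately show ?thesis
    using card_Un_le[of ?F2 G] by linarith
qed

lemma card_functionals_vanishing:
  assumes W: "lin_subspace n W" and T: "lin_subspace n T" and TW: "T \<subseteq> W"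
  shows "card (functionals_vanishing W T) * card T \<le> card W"
  using T TW
proof (induction "card W - card T" arbitrary: T rule: less_induct)
  case less
  show ?case
  proof (cases "T = W")
    case True
    then have "functionals_vanishing W T \<subseteq> {\<lambda>_. 0}"
      by (auto simp: fun_eq_iff dest: functionals_vanishingD(1,3))
    then have "card (functionals_vanishing W T) \<le> card {\<lambda>_::nat \<Rightarrow> bit. 0::bit}"
      by (intro card_mono) simp_all
    then show ?thesis
      using True by simp
  next
    case False
    then obtain x where x: "x \<in> W" "x \<notin> T"
      using less.prems by blast
    let ?T2 = "T \<union> (+) x ` T"
    have T2: "lin_subspace n ?T2"
      using lin_subspace_extend[OF less.prems(1)] x(1) lin_subspaceD(1)[OF W] by blast
    have T2W: "?T2 \<subseteq> W"
      using less.prems(2) x lin_subspaceD(3)[OF W] by auto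
    have cT2: "card ?T2 = 2 * card T"
      using card_lin_subspace_extend[OF less.prems(1) x(2)] .
    have "card T > 0"
      using lin_subspaceD(2)[OF less.prems(1)] finite_lin_subspace[OF less.prems(1)]
      by (auto simp: card_gt_0_iff)
    moreover have "card ?T2 \<le> card W"
      using T2W finite_lin_subspace[OF W] by (rule card_mono[rotated])
    ultimately have "card W - card ?T2 < card W - card T"
      using cT2 by linarith
    then have "card (functionals_vanishing W ?T2) * card ?T2 \<le> card W"
      using less.hyps[OF _ T2 T2W] by blast
    moreover have "card (functionals_vanishing W T) * card T \<le> card (functionals_vanishing W ?T2) * card ?T2"
      using card_functionals_vanishing_extend[OF W less.prems(2) x(1)] cT2 by simp
    ultimately show ?thesis
      by linarith
  qed
qed

section \<open>The switched graph\<close>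

lemma finite_quadric: "finite (quadric n a)"
  using finite_vecs by (rule finite_subset[rotated]) (auto simp: quadric_iff)

locale totally_singular_subspace =
  fixes n :: nat and a :: "nat \<Rightarrow> nat \<Rightarrow> bit" and W :: "(nat \<Rightarrow> bit) set"
  assumes lin_subspace: "lin_subspace n W" and singular: "W - {0} \<subseteq> quadric n a"
begin

abbreviation "Qd \<equiv> quadric n a"
abbreviation "B \<equiv> polar n a"
abbreviation "X \<equiv> typeX n a (W - {0})"
abbreviation "G \<equiv> gamma_adj n a (W - {0})"

text \<open>The points of type (iii).\<close>

definition Z :: "(nat \<Rightarrow> bit) set"
  where "Z = {z \<in> Qd. \<exists>w\<in>W. B z w = 1}"

lemma zero_in_W: "0 \<in> W" and add_in_W: "u \<in> W \<Longrightarrow> v \<in> W \<Longrightarrow> u + v \<in> W"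
  using lin_subspaceD[OF lin_subspace] by auto

lemma finite_W: "finite W"
  using finite_lin_subspace[OF lin_subspace] .

lemma W_in_quadric: "w \<in> W \<Longrightarrow> w \<noteq> 0 \<Longrightarrow> w \<in> Qd"
  using singular by blast

lemma qform_W: "w \<in> W \<Longrightarrow> qform n a w = 0"
  using singular by (cases "w = 0") (auto simp: quadric_iff)

lemma polar_W: "w \<in> W \<Longrightarrow> w' \<in> W \<Longrightarrow> B w w' = 0"
  using qform_W[of "w + w'"] qform_W[of w] qform_W[of w'] add_in_W[of w w'] by (simp add: qform_add)

lemma mem_X_iff: "x \<in> X \<longleftrightarrow> x \<in> Qd \<and> x \<notin> W \<and> (\<forall>w\<in>W. B x w = 0)"
proof (cases "x \<in> Qd \<and> x \<notin> W")
  case True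
  then have x: "x \<in> vecs n" "x + w \<noteq> 0" if "w \<in> W" for w
    using that by (auto simp: quadric_iff fun_bit_add_eq_0_iff)
  have "pjoin n ((W - {0}) \<union> {x}) \<subseteq> Qd \<longleftrightarrow> (\<forall>w\<in>W. x + w \<in> Qd)"
    unfolding pjoin_insert[OF lin_subspace x(1)[OF zero_in_W]] using singular x(2) by auto
  also have "\<dots> \<longleftrightarrow> (\<forall>w\<in>W. B x w = 0)"
    using True x lin_subspaceD(1)[OF lin_subspace]
    by (auto simp: quadric_iff qform_add qform_W)
  finally show ?thesis
    using True by (auto simp: typeX_def zerov_eq_0)
qed (use zero_in_W in \<open>auto simp: typeX_def zerov_eq_0 quadric_iff\<close>)

lemma finite_X: "finite X"
  using finite_quadric by (rule finite_subset[rotated]) (auto simp: mem_X_iff)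

lemma X_not_Z: "x \<in> X \<Longrightarrow> x \<notin> Z"
  by (auto simp: mem_X_iff Z_def)

lemma W_not_X: "w \<in> W \<Longrightarrow> w \<notin> X" and W_not_Z: "w \<in> W \<Longrightarrow> w \<notin> Z"
  by (auto simp: mem_X_iff Z_def polar_W)

lemma quadric_cases:
  assumes "p \<in> Qd"
  obtains (W) "p \<in> W" | (X) "p \<in> X" | (Z) "p \<in> Z"
  using assms by (auto simp: mem_X_iff Z_def) (metis bit_not_zero_iff)

lemma add_W_types:
  assumes u: "u \<in> Qd" and v: "v \<in> W" and uv: "u + v \<in> Qd"
  shows "u + v \<in> X \<longleftrightarrow> u \<in> X" "u + v \<in> Z \<longleftrightarrow> u \<in> Z"
proof -
  have "u + v \<in> W \<longleftrightarrow> u \<in> W"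
    using add_in_W[of "u + v" v] add_in_W[of u v] v by (auto simp: add.assoc)
  moreover have "B (u + v) w = B u w" if "w \<in> W" for w
    using polar_W[OF v that] by (simp add: polar_add_left)
  ultimately show "u + v \<in> X \<longleftrightarrow> u \<in> X" "u + v \<in> Z \<longleftrightarrow> u \<in> Z"
    using u uv by (simp_all add: mem_X_iff Z_def)
qed

lemma X_add_W:
  assumes x: "x \<in> X" and w: "w \<in> W"
  shows "x + w \<in> X"
proof -
  have "x + w \<noteq> 0" "x + w \<notin> W" "x \<in> vecs n"
    using x w add_in_W[of "x + w" w] by (auto simp: mem_X_iff fun_bit_add_eq_0_iff quadric_iff)
  moreover have "w \<in> vecs n"
    using w lin_subspaceD(1)[OF lin_subspace] by blast
  ultimately show ?thesis
    using x w polar_W by (auto simp: mem_X_iff quadric_iff qform_add qform_W polar_add_left)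
qed

text \<open>Translation by a \<open>w\<close> with \<open>B R w = 1\<close> swaps the neighbours and non-neighbours of \<open>R\<close> in \<open>X\<close>.\<close>

lemma card_X_adjacent:
  assumes R: "R \<in> Z"
  shows "2 * card {x \<in> X. qadj n a R x} = card X"
proof -
  obtain w where w: "w \<in> W" "B R w = 1"
    using R by (auto simp: Z_def)
  have R': "R \<in> Qd" "R \<notin> X"
    using R X_not_Z by (auto simp: Z_def)
  define X0 where "X0 = {x \<in> X. B R x = 0}"
  define X1 where "X1 = {x \<in> X. B R x = 1}"
  have adj: "{x \<in> X. qadj n a R x} = X0"
    unfolding X0_def using R' by (auto simp: qadj_iff mem_X_iff)
  have "bij_betw (\<lambda>x. x + w) X0 X1"
    by (rule bij_betwI[where g = "\<lambda>x. x + w"])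
      (use X_add_W w in \<open>auto simp: X0_def X1_def polar_add_right\<close>)
  then have "card X0 = card X1"
    by (rule bij_betw_same_card)
  moreover have "card X = card X0 + card X1"
  proof -
    have "X = X0 \<union> X1" "X0 \<inter> X1 = {}"
      by (auto simp: X0_def X1_def)
    then show ?thesis
      using finite_X by (simp add: card_Un_disjoint)
  qed
  ultimately show ?thesis
    unfolding adj by simp
qed

lemma switched_iff:
  assumes "X \<noteq> {}"
  shows "switched n a (W - {0}) R \<longleftrightarrow> R \<in> Z"
proof
  assume sw: "switched n a (W - {0}) R"
  then have R: "R \<in> Qd" "R \<notin> X"
    by (auto simp: switched_def typeY_def)
  show "R \<in> Z"
  proof (rule ccontr)
    assume "R \<notin> Z"
    with R have "R \<in> W"
      by (cases rule: quadric_cases) auto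
    then have "{x \<in> X. qadj n a R x} = X"
      using R by (auto simp: qadj_iff mem_X_iff polar_commute)
    then show False
      using sw assms finite_X by (simp add: switched_def)
  qed
next
  assume "R \<in> Z"
  then show "switched n a (W - {0}) R"
    using card_X_adjacent X_not_Z by (auto simp: switched_def typeY_def Z_def)
qed

lemma gamma_adj_iff:
  assumes "X \<noteq> {}" "P \<in> Qd" "Q \<in> Qd"
  shows "G P Q \<longleftrightarrow> (P \<noteq> Q \<and> B P Q = 0) \<noteq> (P \<in> Z \<and> Q \<in> X \<or> P \<in> X \<and> Q \<in> Z)"
proof -
  have "P \<noteq> Q" if "P \<in> Z \<and> Q \<in> X \<or> P \<in> X \<and> Q \<in> Z"
    using that X_not_Z by blast
  then show ?thesis
    unfolding gamma_adj_def switched_iff[OF assms(1)] qadj_iff using assms by auto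
qed

lemma gamma_adj_commute: "G P Q \<longleftrightarrow> G Q P"
  unfolding gamma_adj_def qadj_iff by (auto simp: polar_commute)

lemma gamma_adj_W_iff:
  assumes "X \<noteq> {}" "P \<in> Qd" "w \<in> W" "w \<noteq> 0"
  shows "G P w \<longleftrightarrow> P \<noteq> w \<and> B P w = 0"
  using gamma_adj_iff[OF assms(1,2) W_in_quadric[OF assms(3,4)]] W_not_X W_not_Z assms(3) by auto

lemma gamma_adj_Z_iff:
  assumes "X \<noteq> {}" "u \<in> Z" "p \<in> Qd" "p \<noteq> u"
  shows "G u p \<longleftrightarrow> (B u p = 0) \<noteq> (p \<in> X)"
  using gamma_adj_iff[OF assms(1) _ assms(3)] assms(2,4) X_not_Z by (auto simp: Z_def)

lemma gamma_adj_irrefl: "\<not> G P P"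
  by (auto simp: gamma_adj_def switched_def typeY_def qadj_def)

lemma gamma_adj_X_Z_iff:
  assumes "X \<noteq> {}" "x \<in> X" "z \<in> Z"
  shows "G x z \<longleftrightarrow> B x z = 1"
proof -
  have "x \<in> Qd" "z \<in> Qd" "x \<noteq> z"
    using assms(2,3) X_not_Z by (auto simp: mem_X_iff Z_def)
  then show ?thesis
    using gamma_adj_iff[OF assms(1), of x z] assms(2,3) by auto
qed

lemma gamma_adj_Z_Z_iff:
  assumes "X \<noteq> {}" "u \<in> Z" "w \<in> Z"
  shows "G u w \<longleftrightarrow> u \<noteq> w \<and> B u w = 0"
proof -
  have w: "w \<in> Qd" "w \<notin> X"
    using assms(3) X_not_Z by (auto simp: Z_def)
  show ?thesis
  proof (cases "u = w")
    case False
    then show ?thesis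
      using gamma_adj_Z_iff[OF assms(1,2) w(1)] w(2) by auto
  qed (simp add: gamma_adj_irrefl)
qed

text \<open>If every vector of a totally singular \<open>U\<close> orthogonal to \<open>W\<close> lies in \<open>W\<close>, then
  \<open>u \<mapsto> (u + r u, B u |\<^sub>W)\<close>, with \<open>r u \<in> U\<close> chosen with the same restriction \<open>B (r u) |\<^sub>W\<close>,
  injects \<open>U\<close> into \<open>(U \<inter> W) \<times> {functionals on W vanishing on U \<inter> W}\<close>, a set of size at most \<open>|W|\<close>.\<close>

lemma card_le_if_orthogonal_in_W:
  assumes U: "lin_subspace n U" "U - {0} \<subseteq> Qd"
    and orth: "\<And>u. u \<in> U \<Longrightarrow> \<forall>w\<in>W. B u w = 0 \<Longrightarrow> u \<in> W"
  shows "card U \<le> card W"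
proof -
  interpret U: totally_singular_subspace n a U
    using U by unfold_locales
  define T where "T = U \<inter> W"
  have T: "lin_subspace n T"
    unfolding T_def using lin_subspaceD[OF U(1)] lin_subspaceD[OF lin_subspace]
    by (intro lin_subspaceI) auto
  define \<phi> where "\<phi> u = (\<lambda>w. if w \<in> W then B u w else 0)" for u
  have \<phi>: "\<phi> u \<in> functionals_vanishing W T" if "u \<in> U" for u
    using that add_in_W U.polar_W
    by (intro functionals_vanishingI) (auto simp: \<phi>_def polar_add_right T_def)
  define r where "r f = (SOME v. v \<in> U \<and> \<phi> v = f)" for f
  have r: "r (\<phi> u) \<in> U" "\<phi> (r (\<phi> u)) = \<phi> u" if "u \<in> U" for u
    using someI[of "\<lambda>v. v \<in> U \<and> \<phi> v = \<phi> u" u] that by (auto simp: r_def)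
  define h where "h u = (u + r (\<phi> u), \<phi> u)" for u
  have "inj_on h U"
    by (rule inj_onI) (auto simp: h_def)
  moreover have "h ` U \<subseteq> T \<times> functionals_vanishing W T"
  proof
    fix p assume "p \<in> h ` U"
    then obtain u where u: "u \<in> U" "p = h u" by blast
    have "B (u + r (\<phi> u)) w = 0" if "w \<in> W" for w
      using that fun_cong[OF r(2)[OF u(1)], of w] by (simp add: \<phi>_def polar_add_left)
    then have "u + r (\<phi> u) \<in> T"
      using orth U.add_in_W[OF u(1) r(1)[OF u(1)]] by (simp add: T_def)
    then show "p \<in> T \<times> functionals_vanishing W T"
      using u \<phi> by (simp add: h_def)
  qed
  moreover have "finite (T \<times> functionals_vanishing W T)"
    using finite_lin_subspace[OF T] finite_functionals_vanishing[OF finite_W] by blast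
  ultimately have "card U \<le> card (T \<times> functionals_vanishing W T)"
    by (rule card_inj_on_le)
  also have "\<dots> \<le> card W"
    using card_functionals_vanishing[OF lin_subspace T] by (simp add: T_def card_cartesian_product mult.commute)
  finally show ?thesis .
qed

lemma X_nonempty:
  assumes U: "lin_subspace n U" "U - {0} \<subseteq> Qd" and card_U: "card W < card U"
  shows "X \<noteq> {}"
proof
  assume "X = {}"
  have "u \<in> W" if "u \<in> U" "\<forall>w\<in>W. B u w = 0" for u
  proof (rule ccontr)
    assume "u \<notin> W"
    then have "u \<in> X"
      using that U(2) zero_in_W by (auto simp: mem_X_iff)
    with \<open>X = {}\<close> show False
      by simp
  qed
  then show False
    using card_le_if_orthogonal_in_W[OF U] card_U by simp
qed

end

section \<open>Twinned vertices\<close>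

definition twinned :: "'v set \<Rightarrow> ('v \<Rightarrow> 'v \<Rightarrow> bool) \<Rightarrow> 'v \<Rightarrow> bool"
  where "twinned V E v \<longleftrightarrow> (\<forall>u\<in>V. E v u \<longrightarrow> (\<exists>w\<in>V. E v w \<and> E u w \<and>
      (\<forall>p\<in>V. E v p \<and> p \<noteq> u \<and> p \<noteq> w \<longrightarrow> (E u p \<longleftrightarrow> E w p))))"

lemma twinned_iso:
  assumes f: "bij_betw f V1 V2" and E: "\<And>x y. x \<in> V1 \<Longrightarrow> y \<in> V1 \<Longrightarrow> E1 x y \<longleftrightarrow> E2 (f x) (f y)"
    and v: "v \<in> V1"
  shows "twinned V1 E1 v \<longleftrightarrow> twinned V2 E2 (f v)"
proof -
  have V2: "V2 = f ` V1"
    using f by (simp add: bij_betw_def)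
  have inj: "x \<in> V1 \<Longrightarrow> y \<in> V1 \<Longrightarrow> f x = f y \<longleftrightarrow> x = y" for x y
    using f by (auto simp: bij_betw_def inj_on_def)
  show ?thesis
    unfolding twinned_def V2 using v by (simp add: E[symmetric] inj)
qed

lemma card_twinned_graph_iso:
  assumes "graph_iso V1 E1 V2 E2"
  shows "card {v \<in> V1. twinned V1 E1 v} = card {v \<in> V2. twinned V2 E2 v}"
proof -
  obtain f where f: "bij_betw f V1 V2" and E: "\<And>x y. x \<in> V1 \<Longrightarrow> y \<in> V1 \<Longrightarrow> E1 x y \<longleftrightarrow> E2 (f x) (f y)"
    using assms unfolding graph_iso_def by blast
  have "bij_betw f {v \<in> V1. twinned V1 E1 v} {v \<in> V2. twinned V2 E2 v}"
    using f twinned_iso[of f V1 V2 E1 E2, OF f E] unfolding bij_betw_def inj_on_def by auto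
  then show ?thesis
    by (rule bij_betw_same_card)
qed

context totally_singular_subspace
begin

lemma twinned_W:
  assumes X: "X \<noteq> {}" and v: "v \<in> W" "v \<noteq> 0"
  shows "twinned Qd G v"
  unfolding twinned_def
proof (intro ballI impI)
  fix u assume u: "u \<in> Qd" and "G v u"
  have v': "v \<in> Qd" "v \<notin> X" "v \<notin> Z"
    using v W_in_quadric W_not_X W_not_Z by auto
  have uv: "u \<noteq> v" "B u v = 0"
    using \<open>G v u\<close> gamma_adj_W_iff[OF X u v] gamma_adj_commute by auto
  define w where "w = u + v"
  have w: "w \<in> Qd"
    unfolding w_def using add_in_quadric[OF u v'(1) uv(2,1)] .
  have "w \<noteq> u" "w \<noteq> v"
    using u v by (auto simp: w_def quadric_iff fun_bit_add_eq_left_iff fun_bit_add_eq_right_iff)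
  have types: "w \<in> X \<longleftrightarrow> u \<in> X" "w \<in> Z \<longleftrightarrow> u \<in> Z"
    using add_W_types[OF u v(1)] w by (simp_all add: w_def)
  have "G v w"
    using gamma_adj_W_iff[OF X w v] gamma_adj_commute \<open>w \<noteq> v\<close> uv(2)
    by (simp add: w_def polar_add_left)
  moreover have "G u w"
    using gamma_adj_iff[OF X u w] types X_not_Z \<open>w \<noteq> u\<close> uv(2)
    by (auto simp: w_def polar_add_right)
  moreover have "G u p \<longleftrightarrow> G w p" if p: "p \<in> Qd" "G v p" "p \<noteq> u" "p \<noteq> w" for p
  proof -
    have "B v p = 0"
      using p gamma_adj_W_iff[OF X p(1) v] gamma_adj_commute polar_commute by metis
    then have "B w p = B u p"
      by (simp add: w_def polar_add_left)
    then show ?thesis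
      using gamma_adj_iff[OF X u p(1)] gamma_adj_iff[OF X w p(1)] types p(3,4) by auto
  qed
  ultimately show "\<exists>w\<in>Qd. G v w \<and> G u w \<and> (\<forall>p\<in>Qd. G v p \<and> p \<noteq> u \<and> p \<noteq> w \<longrightarrow> (G u p \<longleftrightarrow> G w p))"
    using w by blast
qed

text \<open>For \<open>s = 0\<close>, away from \<open>v\<close> the switched graph is the collinearity graph translated by \<open>v\<close>.\<close>

lemma gamma_adj_point_iff:
  assumes W: "W = {0, v}" and X: "X \<noteq> {}" and p: "p \<in> Qd" and q: "q \<in> Qd"
  shows "G p q \<longleftrightarrow> p \<noteq> q \<and>
    (if p = v then B q v = 0 else if q = v then B p v = 0 else B (p + v) (q + v) = 0)"
proof -
  have "x \<in> X \<longleftrightarrow> x \<noteq> v \<and> B x v = 0" "x \<in> Z \<longleftrightarrow> B x v = 1" if "x \<in> Qd" for x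
    using that unfolding mem_X_iff Z_def unfolding W by (auto simp: quadric_iff)
  then show ?thesis
    using gamma_adj_iff[OF X p q] p q polar_commute[of n a v q] polar_commute[of n a v p]
    by (cases "B p v"; cases "B q v"; cases "B p q") (auto simp: polar_add_left polar_add_right)
qed

lemma twin_partners_point_v:
  assumes W: "W = {0, v}" "v \<noteq> 0" and X: "X \<noteq> {}" and c: "c \<in> Qd" "c \<noteq> v" "B c v = 0"
  shows "G c v \<and> G c (c + v) \<and> G v (c + v) \<and>
    (\<forall>p\<in>Qd. G c p \<and> p \<noteq> v \<and> p \<noteq> c + v \<longrightarrow> (G v p \<longleftrightarrow> G (c + v) p))"
proof -
  have v: "v \<in> Qd"
    using W W_in_quadric by simp
  have cvQ: "c + v \<in> Qd"
    using add_in_quadric[OF c(1) v c(3,2)] .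
  have ne: "c + v \<noteq> v" "c + v \<noteq> c"
    using c(1) W(2) by (auto simp: quadric_iff fun_bit_add_eq_right_iff fun_bit_add_eq_left_iff)
  note adj = gamma_adj_point_iff[OF W(1) X]
  have "G (c + v) p \<longleftrightarrow> B p v = 0" if "p \<in> Qd" "G c p" "p \<noteq> v" "p \<noteq> c + v" for p
    using that adj[OF c(1) that(1)] adj[OF cvQ that(1)] ne c
    by (auto simp: polar_add_left polar_add_right polar_commute)
  then show ?thesis
    using adj[OF c(1) v] adj[OF c(1) cvQ] adj[OF v cvQ] adj[OF v] ne c
    by (auto simp: polar_add_left polar_add_right polar_commute)
qed

text \<open>The partner of \<open>u\<close> is \<open>u + c + v\<close>: translated by \<open>v\<close>, it is the third point of the line \<open>(c + v)(u + v)\<close>.\<close>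

lemma twin_partners_point:
  assumes W: "W = {0, v}" "v \<noteq> 0" and X: "X \<noteq> {}" and c: "c \<in> Qd" "c \<noteq> v"
    and u: "u \<in> Qd" "u \<noteq> v" "u \<noteq> c + v" "G c u"
  shows "u + c + v \<in> Qd \<and> G c (u + c + v) \<and> G u (u + c + v) \<and>
    (\<forall>p\<in>Qd. G c p \<and> p \<noteq> u \<and> p \<noteq> u + c + v \<longrightarrow> (G u p \<longleftrightarrow> G (u + c + v) p))"
proof -
  define w where "w = u + c + v"
  note adj = gamma_adj_point_iff[OF W(1) X]
  have cu: "c \<noteq> u" "B (c + v) (u + v) = 0"
    using u adj[OF c(1) u(1)] c(2) by auto
  have wv: "w + v = (c + v) + (u + v)"
    by (simp add: w_def ac_simps)
  have nz: "c \<noteq> 0" "u \<noteq> 0" "v \<noteq> 0" "c \<in> vecs n" "u \<in> vecs n" "v \<in> vecs n"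
    using c u W W_in_quadric by (auto simp: quadric_iff)
  have "w \<noteq> v" "w \<noteq> c" "w \<noteq> u" "w \<noteq> 0"
    using cu(1) u(2,3) c(2) nz
    by (auto simp: w_def add.assoc fun_bit_add_eq_0_iff fun_bit_add_eq_right_iff fun_bit_add_eq_left_iff
        add.left_commute[of u c])
  moreover have "qform n a w = 0"
    using cu(2) c(1) u(1) W_in_quadric[of v] W
    by (auto simp: w_def quadric_iff qform_add polar_add_left polar_add_right polar_commute ac_simps)
  ultimately have w: "w \<in> Qd"
    using nz by (auto simp: quadric_iff w_def)
  have "B (c + v) (w + v) = B (c + v) (u + v)" "B (u + v) (w + v) = B (u + v) (c + v)"
    unfolding wv by (subst polar_add_right, simp)+
  then have "G c w" "G u w"
    using adj[OF c(1) w] adj[OF u(1) w] \<open>w \<noteq> v\<close> \<open>w \<noteq> c\<close> \<open>w \<noteq> u\<close> c(2) u(2) cu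
    by (auto simp: polar_commute)
  moreover have "G u p \<longleftrightarrow> G w p" if p: "p \<in> Qd" "G c p" "p \<noteq> u" "p \<noteq> w" for p
  proof (cases "p = v")
    case True
    then have "B c v = 0"
      using p(2) adj[OF c(1) p(1)] c(2) by simp
    then show ?thesis
      using True adj[OF u(1) p(1)] adj[OF w p(1)] u(2) \<open>w \<noteq> v\<close>
      by (simp add: w_def polar_add_left)
  next
    case False
    then have "B (c + v) (p + v) = 0"
      using p(2) adj[OF c(1) p(1)] c(2) by simp
    moreover have "B (w + v) (p + v) = B (c + v) (p + v) + B (u + v) (p + v)"
      unfolding wv by (rule polar_add_left)
    ultimately show ?thesis
      using False adj[OF u(1) p(1)] adj[OF w p(1)] u(2) \<open>w \<noteq> v\<close> p(3,4) by simp
  qed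
  ultimately show ?thesis
    using w by (simp add: w_def)
qed

lemma twinned_point:
  assumes W: "W = {0, v}" "v \<noteq> 0" and X: "X \<noteq> {}" and c: "c \<in> Qd"
  shows "twinned Qd G c"
proof (cases "c = v")
  case True
  then show ?thesis
    using twinned_W[OF X] W by simp
next
  case cv: False
  have v: "v \<in> Qd"
    using W W_in_quadric by simp
  note adj = gamma_adj_point_iff[OF W(1) X]
  show ?thesis
    unfolding twinned_def
  proof (intro ballI impI)
    fix u assume u: "u \<in> Qd" and "G c u"
    consider "u = v" | "u = c + v" | "u \<noteq> v" "u \<noteq> c + v"
      by blast
    then show "\<exists>w\<in>Qd. G c w \<and> G u w \<and> (\<forall>p\<in>Qd. G c p \<and> p \<noteq> u \<and> p \<noteq> w \<longrightarrow> (G u p \<longleftrightarrow> G w p))"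
    proof cases
      case 1
      then have "B c v = 0"
        using \<open>G c u\<close> adj[OF c v] cv by simp
      then show ?thesis
        using twin_partners_point_v[OF W X c cv] 1 add_in_quadric[OF c v _ cv] by blast
    next
      case 2
      then have "c + v \<noteq> v" "B c v = 0"
        using \<open>G c u\<close> adj[OF c u] cv c by (auto simp: quadric_iff polar_add_left polar_add_right polar_commute)
      then show ?thesis
        using twin_partners_point_v[OF W X c cv] 2 v gamma_adj_commute by metis
    next
      case 3
      then show ?thesis
        using twin_partners_point[OF W X c cv u] \<open>G c u\<close> by blast
    qed
  qed
qed

lemma exists_W_avoiding:
  assumes "card W \<ge> 4"
  obtains w where "w \<in> W" "w \<noteq> 0" "w \<noteq> q"
proof -
  have "card W - card {0, q} \<le> card (W - {0, q})"
    by (rule diff_card_le_card_Diff) simp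
  moreover have "card {0, q} \<le> 2"
    by (simp add: card_insert_if)
  ultimately have "card (W - {0, q}) \<noteq> 0"
    using assms by linarith
  then obtain w where "w \<in> W - {0, q}"
    by (metis all_not_in_conv card.empty)
  then show thesis
    using that by blast
qed

lemma exists_W_orthogonal:
  assumes "card W \<ge> 4"
  obtains w where "w \<in> W" "w \<noteq> 0" "B c w = 0"
proof -
  obtain w1 where w1: "w1 \<in> W" "w1 \<noteq> 0"
    using exists_W_avoiding[OF assms] by blast
  obtain w2 where w2: "w2 \<in> W" "w2 \<noteq> 0" "w2 \<noteq> w1"
    using exists_W_avoiding[OF assms] by blast
  have "w1 + w2 \<in> W" "w1 + w2 \<noteq> 0"
    using add_in_W[OF w1(1) w2(1)] w2(3) by (auto simp: fun_bit_add_eq_0_iff)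
  then show thesis
    using that w1 w2 by (cases "B c w1"; cases "B c w2") (auto simp: polar_add_right)
qed

lemma exists_X_polar_1:
  assumes "X \<noteq> {}" "c \<in> Z"
  obtains x where "x \<in> X" "B c x = 1"
proof -
  obtain x where x: "x \<in> X"
    using assms(1) by blast
  obtain w where w: "w \<in> W" "B c w = 1"
    using assms(2) by (auto simp: Z_def)
  show thesis
    using that[OF x] that[OF X_add_W[OF x w(1)]] w(2) by (cases "B c x") (auto simp: polar_add_right)
qed

lemma twins_Z_sum_orthogonal:
  assumes X: "X \<noteq> {}" and u: "u \<in> Z" and w: "w \<in> Z" and "G u w"
    and twins: "\<And>p. p \<in> Qd \<Longrightarrow> G c p \<Longrightarrow> p \<noteq> u \<Longrightarrow> p \<noteq> w \<Longrightarrow> G u p \<longleftrightarrow> G w p"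
    and p: "p \<in> Qd" "G c p"
  shows "B (u + w) p = 0"
proof -
  have "B u w = 0"
    using \<open>G u w\<close> gamma_adj_Z_Z_iff[OF X u w] by simp
  show ?thesis
  proof (cases "p = u \<or> p = w")
    case True
    then show ?thesis
      using \<open>B u w = 0\<close> polar_commute[of n a u w] by (auto simp: polar_add_left)
  next
    case False
    then show ?thesis
      using twins[OF p] gamma_adj_Z_iff[OF X u p(1)] gamma_adj_Z_iff[OF X w p(1)]
      by (cases "B u p"; cases "B w p") (auto simp: polar_add_left)
  qed
qed

lemma twin_partner_in_Z:
  assumes X: "X \<noteq> {}" and u: "u \<in> Z" and w: "w \<in> Qd" "G u w"
    and twins: "\<And>p. p \<in> Qd \<Longrightarrow> G c p \<Longrightarrow> p \<noteq> u \<Longrightarrow> p \<noteq> w \<Longrightarrow> G u p \<longleftrightarrow> G w p"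
    and b: "b \<in> W" "b \<noteq> 0" "G c b" "B u b = 1"
  shows "w \<in> Z"
proof (rule ccontr)
  assume "w \<notin> Z"
  have bQ: "b \<in> Qd"
    using W_in_quadric[OF b(1,2)] .
  have "w \<noteq> u"
    using \<open>w \<notin> Z\<close> u by blast
  then have uw: "B u w = 0 \<or> w \<in> X"
    using gamma_adj_Z_iff[OF X u w(1)] w(2) by auto
  have "w \<noteq> b \<and> B w b = 0"
  proof (rule quadric_cases[OF w(1)])
    assume "w \<in> W"
    then show ?thesis
      using uw b(1,4) polar_W W_not_X by auto
  next
    assume "w \<in> X"
    then show ?thesis
      using b(1) by (auto simp: mem_X_iff)
  qed (use \<open>w \<notin> Z\<close> in blast)
  then have "w \<noteq> b" "B w b = 0"
    by simp_all
  then have "G w b"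
    using gamma_adj_W_iff[OF X w(1) b(1,2)] by simp
  moreover have "\<not> G u b"
    using gamma_adj_W_iff[OF X _ b(1,2)] u b(4) by (simp add: Z_def)
  moreover have "b \<noteq> u"
    using u b(1) W_not_Z by blast
  ultimately show False
    using twins[OF bQ b(3)] \<open>w \<noteq> b\<close> by blast
qed


lemma twinned_Z_partner:
  assumes X: "X \<noteq> {}" and "twinned Qd G c" and u: "u \<in> Z" "G c u"
    and b: "b \<in> W" "b \<noteq> 0" "G c b" "B u b = 1"
  obtains w d where "w \<in> Z" "G c w" "d = u + w" "d \<in> Qd" "\<And>p. p \<in> Qd \<Longrightarrow> G c p \<Longrightarrow> B d p = 0"
proof -
  obtain w where w: "w \<in> Qd" "G c w" "G u w"
    and twins: "\<And>p. p \<in> Qd \<Longrightarrow> G c p \<Longrightarrow> p \<noteq> u \<Longrightarrow> p \<noteq> w \<Longrightarrow> G u p \<longleftrightarrow> G w p"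
    using assms(2) u unfolding twinned_def Z_def by blast
  have wZ: "w \<in> Z"
    using twin_partner_in_Z[OF X u(1) w(1,3) twins b] .
  have "u \<noteq> w" "B u w = 0"
    using w(3) gamma_adj_Z_Z_iff[OF X u(1) wZ] by simp_all
  then have "u + w \<in> Qd"
    using add_in_quadric w(1) u(1) by (simp add: Z_def)
  then show thesis
    using that[OF wZ w(2) refl] twins_Z_sum_orthogonal[OF X u(1) wZ w(3) twins] by blast
qed

context
  assumes ns: "nonsingular n a" and X: "X \<noteq> {}" and card_W: "card W \<ge> 4"
begin

lemma exists_Z_polar_1_1:
  assumes c: "c \<in> X" and d: "d \<in> Qd" "\<forall>b\<in>W. B d b = 0" "B c d = 0" "c \<noteq> d"
  obtains p where "p \<in> Z" "B p c = 1" "B p d = 1"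
proof (cases "d \<in> W")
  case True
  obtain p where "p \<in> Qd" "B p c = 1" "B p d = 1"
    using quadric_point_polar_values_two[OF ns _ d(1) d(3,4), of 1 1] c by (auto simp: mem_X_iff)
  then show thesis
    using that True by (auto simp: Z_def)
next
  case False
  obtain b where b: "b \<in> W" "b \<noteq> 0" "b \<noteq> c + d"
    using exists_W_avoiding[OF card_W] by blast
  have "c \<in> Qd" "b \<in> Qd" "B c b = 0" "c \<noteq> b" "d \<noteq> b"
    using c b False W_in_quadric by (auto simp: mem_X_iff)
  then obtain p where "p \<in> Qd" "B p c = 1" "B p d = 1" "B p b = 1"
    using quadric_point_polar_values_three[OF ns _ d(1) _ d(3) _ _ d(4), of b 1 1 1] d(2) b(1,3)
    by auto
  then show thesis
    using that b(1) by (auto simp: Z_def)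
qed

lemma not_twinned_X:
  assumes c: "c \<in> X"
  shows "\<not> twinned Qd G c"
proof
  assume "twinned Qd G c"
  have cQ: "c \<in> Qd" and c_perp: "\<forall>b\<in>W. B c b = 0"
    using c by (auto simp: mem_X_iff)
  have Gc_W: "G c b" if "b \<in> W" "b \<noteq> 0" for b
    using gamma_adj_W_iff[OF X cQ that] c_perp that W_not_X c by auto
  obtain b where b: "b \<in> W" "b \<noteq> 0"
    using exists_W_avoiding[OF card_W] by blast
  have "c \<noteq> b" "B c b = 0"
    using c b c_perp W_not_X by auto
  then obtain u where u: "u \<in> Qd" "B u c = 1" "B u b = 1"
    using quadric_point_polar_values_two[OF ns cQ W_in_quadric[OF b], of 1 1] by auto
  have uZ: "u \<in> Z"
    using u b by (auto simp: Z_def)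
  have "G c u"
    using gamma_adj_X_Z_iff[OF X c uZ] u(2) by (simp add: polar_commute)
  then obtain w d where wZ: "w \<in> Z" "G c w" and d: "d = u + w" "d \<in> Qd"
    and orth: "\<And>p. p \<in> Qd \<Longrightarrow> G c p \<Longrightarrow> B d p = 0"
    using twinned_Z_partner[OF X \<open>twinned Qd G c\<close> uZ _ b Gc_W[OF b] u(3)] by blast
  have "\<forall>b\<in>W. B d b = 0"
    using orth Gc_W W_in_quadric by (metis polar_zero(2))
  moreover have "B c d = 0"
    using gamma_adj_X_Z_iff[OF X c uZ] gamma_adj_X_Z_iff[OF X c wZ(1)] \<open>G c u\<close> wZ(2)
    by (simp add: d(1) polar_add_right)
  moreover have "c \<noteq> d"
  proof
    assume "c = d"
    then have "w = u + c"
      by (simp add: d(1))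
    then show False
      using u(1,2) cQ wZ(1) by (simp add: Z_def quadric_iff qform_add polar_commute)
  qed
  ultimately obtain p where "p \<in> Z" "B p c = 1" "B p d = 1"
    using exists_Z_polar_1_1[OF c d(2)] by blast
  then show False
    using orth[of p] gamma_adj_X_Z_iff[OF X c] by (auto simp: Z_def polar_commute)
qed

lemma exists_Z_polar_0_1:
  assumes c: "c \<in> Z" and d: "d \<in> Qd" "B c d = 0" "c \<noteq> d"
    and b: "b \<in> W" "b \<noteq> 0" "B c b = 0" "B d b = 0" "d \<noteq> b" "c + d \<noteq> b"
  obtains p where "p \<in> Z" "B p c = 0" "B p d = 1"
proof -
  have "c \<in> Qd" "c \<noteq> b"
    using c b(1) W_not_Z by (auto simp: Z_def)
  then obtain p where "p \<in> Qd" "B p c = 0" "B p d = 1" "B p b = 1"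
    using quadric_point_polar_values_three[OF ns _ d(1) W_in_quadric[OF b(1,2)] d(2) b(3,4) d(3) _ b(5,6),
        of 0 1 1]
    by auto
  then show thesis
    using that b(1) by (auto simp: Z_def)
qed

lemma not_twinned_Z:
  assumes c: "c \<in> Z"
  shows "\<not> twinned Qd G c"
proof
  assume "twinned Qd G c"
  have cQ: "c \<in> Qd"
    using c by (simp add: Z_def)
  obtain b where b: "b \<in> W" "b \<noteq> 0" "B c b = 0"
    using exists_W_orthogonal[OF card_W] by blast
  have "c \<noteq> b"
    using c b(1) W_not_Z by blast
  then have Gcb: "G c b"
    using gamma_adj_W_iff[OF X cQ b(1,2)] b(3) by simp
  obtain u where u: "u \<in> Qd" "B u c = 0" "B u b = 1"
    using quadric_point_polar_values_two[OF ns cQ W_in_quadric[OF b(1,2)] b(3) \<open>c \<noteq> b\<close>, of 0 1] by auto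
  have uZ: "u \<in> Z"
    using u b by (auto simp: Z_def)
  have "G c u"
    using gamma_adj_Z_Z_iff[OF X c uZ] u(2,3) b(3) by (auto simp: polar_commute)
  then obtain w d where wZ: "w \<in> Z" "G c w" and d: "d = u + w" "d \<in> Qd"
    and orth: "\<And>p. p \<in> Qd \<Longrightarrow> G c p \<Longrightarrow> B d p = 0"
    using twinned_Z_partner[OF X \<open>twinned Qd G c\<close> uZ _ b(1,2) Gcb u(3)] by blast
  have wd: "w = u + d"
    by (simp add: d(1))
  have "B c d = 0"
    using gamma_adj_Z_Z_iff[OF X c wZ(1)] wZ(2) u(2) by (simp add: d(1) polar_add_right polar_commute)
  moreover have "c \<noteq> d"
  proof
    assume "c = d"
    obtain x where x: "x \<in> X" "B c x = 1"
      using exists_X_polar_1[OF X c] by blast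
    then have "G c x"
      using gamma_adj_X_Z_iff[OF X x(1) c] gamma_adj_commute by (simp add: polar_commute)
    then show False
      using orth[of x] x \<open>c = d\<close> by (simp add: mem_X_iff)
  qed
  moreover have "B d b = 0"
    using orth[OF W_in_quadric[OF b(1,2)] Gcb] .
  moreover have "d \<noteq> b" "c + d \<noteq> b"
    using wZ(1) u(1,2,3) cQ W_in_quadric[OF b(1,2)] b(3)
    by (auto simp: Z_def wd quadric_iff qform_add polar_add_left polar_add_right polar_commute)
  ultimately obtain p where "p \<in> Z" "B p c = 0" "B p d = 1"
    using exists_Z_polar_0_1[OF c d(2) _ _ b(1,2,3)] by blast
  moreover have "p \<noteq> c"
    using \<open>B c d = 0\<close> \<open>B p d = 1\<close> by auto
  ultimately show False
    using orth[of p] gamma_adj_Z_Z_iff[OF X c] by (auto simp: Z_def polar_commute)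
qed

lemma twinned_iff_W:
  assumes "c \<in> Qd"
  shows "twinned Qd G c \<longleftrightarrow> c \<in> W"
proof (rule quadric_cases[OF assms])
  assume "c \<in> W"
  then show ?thesis
    using twinned_W[OF X] assms by (simp add: quadric_iff)
qed (use not_twinned_X not_twinned_Z W_not_X W_not_Z in blast)+

end

end

section \<open>Counting twinned vertices\<close>

lemma proj_subspaceE:
  assumes "proj_subspace n s S"
  obtains W where "lin_subspace n W" "card W = 2 ^ (s + 1)" "S = W - {0}"
  using assms unfolding proj_subspace_def zerov_eq_0 by blast

lemma card_proj_subspace:
  assumes "proj_subspace n s S"
  shows "card S = 2 ^ (s + 1) - 1"
proof -
  obtain W where "lin_subspace n W" "card W = 2 ^ (s + 1)" "S = W - {0}"
    using proj_subspaceE[OF assms] by blast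
  then show ?thesis
    using finite_lin_subspace lin_subspaceD(2) by (simp add: card_Diff_singleton)
qed

lemma typeX_nonempty:
  assumes g: "has_proj_index n a g" and "s < g" and \<alpha>: "proj_subspace n s \<alpha>" "\<alpha> \<subseteq> quadric n a"
  shows "typeX n a \<alpha> \<noteq> {}"
proof -
  obtain W where W: "lin_subspace n W" "card W = 2 ^ (s + 1)" "\<alpha> = W - {0}"
    using proj_subspaceE[OF \<alpha>(1)] by blast
  obtain S where S: "proj_subspace n g S" "S \<subseteq> quadric n a"
    using g unfolding has_proj_index_def by blast
  obtain U where U: "lin_subspace n U" "card U = 2 ^ (g + 1)" "U - {0} \<subseteq> quadric n a"
    using proj_subspaceE[OF S(1)] S(2) by metis
  interpret totally_singular_subspace n a W
    using W \<alpha>(2) by unfold_locales simp_all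
  have "card W < card U"
    using W(2) U(2) \<open>s < g\<close> by simp
  then show ?thesis
    using X_nonempty[OF U(1,3)] W(3) by simp
qed

lemma card_twinned_gamma_adj:
  assumes ns: "nonsingular n a" and \<alpha>: "proj_subspace n s \<alpha>" "\<alpha> \<subseteq> quadric n a"
    and X: "typeX n a \<alpha> \<noteq> {}"
  shows "card {v \<in> quadric n a. twinned (quadric n a) (gamma_adj n a \<alpha>) v} =
    (if s = 0 then card (quadric n a) else 2 ^ (s + 1) - 1)"
proof -
  obtain W where W: "lin_subspace n W" "card W = 2 ^ (s + 1)" "\<alpha> = W - {0}"
    using proj_subspaceE[OF \<alpha>(1)] by blast
  interpret totally_singular_subspace n a W
    using W \<alpha>(2) by unfold_locales simp_all
  show ?thesis
  proof (cases "s = 0")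
    case True
    then have "card (W - {0}) = 1"
      using W(2) zero_in_W finite_W by (simp add: card_Diff_singleton)
    then obtain v where "W - {0} = {v}"
      by (auto simp: card_Suc_eq)
    then have "W = {0, v}" "v \<noteq> 0"
      using zero_in_W by auto
    then have "{v \<in> Qd. twinned Qd G v} = Qd"
      using twinned_point X[unfolded W(3)] by blast
    then show ?thesis
      using True W(3) by simp
  next
    case False
    then have "card W \<ge> 4"
      using W(2) power_increasing[of 2 "s + 1" "2::nat"] by simp
    then have "{v \<in> Qd. twinned Qd G v} = \<alpha>"
      using twinned_iff_W[OF ns] X W(3) \<alpha>(2) by (auto simp: quadric_iff)
    then show ?thesis
      using card_proj_subspace[OF \<alpha>(1)] False W(3) by simp
  qed
qed

lemma card_quadric_gt:
  assumes "has_proj_index n a g" "k < g"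
  shows "2 ^ (k + 1) - 1 < card (quadric n a)"
proof -
  obtain S where S: "proj_subspace n g S" "S \<subseteq> quadric n a"
    using assms(1) unfolding has_proj_index_def by blast
  then have "card S \<le> card (quadric n a)"
    using card_mono[OF finite_quadric] by blast
  moreover have "(2::nat) ^ (k + 1) < 2 ^ (g + 1)" "1 \<le> (2::nat) ^ (k + 1)"
    using assms(2) by (simp_all add: power_strict_increasing)
  ultimately show ?thesis
    using card_proj_subspace[OF S(1)] by linarith
qed

lemma power2_minus_1_inject:
  assumes "(2::nat) ^ (s + 1) - 1 = 2 ^ (t + 1) - 1"
  shows "s = t"
proof -
  have "1 \<le> (2::nat) ^ (s + 1)" "1 \<le> (2::nat) ^ (t + 1)"
    by simp_all
  then have "(2::nat) ^ (s + 1) = 2 ^ (t + 1)"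
    using assms by linarith
  then show ?thesis
    by simp
qed

theorem theorem6p2:
  fixes n g s t :: nat and a :: "nat \<Rightarrow> nat \<Rightarrow> bit"
    and \<alpha> \<beta> :: "(nat \<Rightarrow> bit) set"
  assumes "nonsingular n a"
    and "has_proj_index n a g" and "1 \<le> g"
    and "s < g" and "t < g" and "s \<noteq> t"
    and "proj_subspace n s \<alpha>" and "\<alpha> \<subseteq> quadric n a"
    and "proj_subspace n t \<beta>" and "\<beta> \<subseteq> quadric n a"
  shows "\<not> graph_iso (quadric n a) (gamma_adj n a \<alpha>) (quadric n a) (gamma_adj n a \<beta>)"
proof
  assume "graph_iso (quadric n a) (gamma_adj n a \<alpha>) (quadric n a) (gamma_adj n a \<beta>)"
  then have "card {v \<in> quadric n a. twinned (quadric n a) (gamma_adj n a \<alpha>) v} =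
      card {v \<in> quadric n a. twinned (quadric n a) (gamma_adj n a \<beta>) v}"
    by (rule card_twinned_graph_iso)
  then have "(if s = 0 then card (quadric n a) else 2 ^ (s + 1) - 1) =
      (if t = 0 then card (quadric n a) else 2 ^ (t + 1) - 1)"
    unfolding card_twinned_gamma_adj[OF assms(1,7,8) typeX_nonempty[OF assms(2,4,7,8)]]
      card_twinned_gamma_adj[OF assms(1,9,10) typeX_nonempty[OF assms(2,5,9,10)]] .
  then show False
    using card_quadric_gt[OF assms(2,4)] card_quadric_gt[OF assms(2,5)] power2_minus_1_inject[of s t] \<open>s \<noteq> t\<close>
    by (auto split: if_splits)
qed

end
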